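(* Let $n\ge1$ and let $P=\{(i,j)\colon 1\le i\le j\le n\}$ be the shifted staircase. Fix $0\le k\le n-1$ and let $B=\{(i,j)\in P\colon j-i=k\}$. Then $\sum_{p\in B}\mathbb{1}_p\equiv (n-k)/2$.
   Context: $P$ is ordered by $(i,j)\le(i',j')$ iff $i\le i'$ and $j\le j'$. $\mathcal{J}(P)$ is the set of order ideals of $P$. For $x\in P$, $I\in\mathcal{J}(P)$: $\mathbb{1}_x(I)=1$ if $x\in I$, else $0$; $T_x^+(I)=1$ if $x$ is a minimal element of $P\setminus I$, else $0$; $T_x^-(I)=1$ if $x$ is a maximal element of $I$, else $0$; $T_x=T_x^+-T_x^-$. For $f,g\colon\mathcal{J}(P)\to\mathbb{R}$, $f\equiv g$ means $f-g=\sum_{x\in P}c_xT_x$ for some real constants $c_x$; a real number denotes the corresponding constant function. *)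

theory Defs
  imports Main "HOL.Real"
begin

definition pleq :: "nat \<times> nat \<Rightarrow> nat \<times> nat \<Rightarrow> bool" where
  "pleq x y \<longleftrightarrow> fst x \<le> fst y \<and> snd x \<le> snd y"

definition staircase :: "nat \<Rightarrow> (nat \<times> nat) set" where
  "staircase n = {(i, j). 1 \<le> i \<and> i \<le> j \<and> j \<le> n}"

definition order_ideals :: "(nat \<times> nat) set \<Rightarrow> (nat \<times> nat) set set" where
  "order_ideals Q = {I. I \<subseteq> Q \<and> (\<forall>x\<in>I. \<forall>y\<in>Q. pleq y x \<longrightarrow> y \<in> I)}"

definition indic :: "nat \<times> nat \<Rightarrow> (nat \<times> nat) set \<Rightarrow> real" where
  "indic x I = (if x \<in> I then 1 else 0)"

definition Tplus :: "(nat \<times> nat) set \<Rightarrow> nat \<times> nat \<Rightarrow> (nat \<times> nat) set \<Rightarrow> real" where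
  "Tplus Q x I = (if x \<in> Q - I \<and> (\<forall>y\<in>Q - I. pleq y x \<longrightarrow> y = x) then 1 else 0)"

definition Tminus :: "(nat \<times> nat) set \<Rightarrow> nat \<times> nat \<Rightarrow> (nat \<times> nat) set \<Rightarrow> real" where
  "Tminus Q x I = (if x \<in> I \<and> (\<forall>y\<in>I. pleq x y \<longrightarrow> y = x) then 1 else 0)"

definition toggle :: "(nat \<times> nat) set \<Rightarrow> nat \<times> nat \<Rightarrow> (nat \<times> nat) set \<Rightarrow> real" where
  "toggle Q x I = Tplus Q x I - Tminus Q x I"

definition toggle_equiv :: "(nat \<times> nat) set \<Rightarrow> ((nat \<times> nat) set \<Rightarrow> real) \<Rightarrow> ((nat \<times> nat) set \<Rightarrow> real) \<Rightarrow> bool" where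
  "toggle_equiv Q f g \<longleftrightarrow>
     (\<exists>c :: nat \<times> nat \<Rightarrow> real. \<forall>I\<in>order_ideals Q. f I - g I = (\<Sum>x\<in>Q. c x * toggle Q x I))"

end

theory Submission imports Defs begin

text \<open>An order ideal \<open>I\<close> of the shifted staircase meets the diagonal \<open>j - i = e\<close> in an
initial segment of some length \<open>N\<^sub>e\<close>, and \<open>N\<^sub>0 \<ge> N\<^sub>1 \<ge> \<dots> \<ge> N\<^sub>n = 0\<close> decreases in steps
of \<open>0\<close> or \<open>1\<close>. On a diagonal only the first element outside \<open>I\<close> can be toggled in and
only the last element of \<open>I\<close> can be toggled out, so the sum \<open>D\<^sub>e\<close> of the toggles along the
diagonal is \<open>D\<^sub>0 = 1 - 2 (N\<^sub>0 - N\<^sub>1)\<close> and \<open>D\<^sub>e = (N\<^sub>e\<^sub>-\<^sub>1 - N\<^sub>e) - (N\<^sub>e - N\<^sub>e\<^sub>+\<^sub>1)\<close> for \<open>e > 0\<close>.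
Hence \<open>D\<^sub>0/2 + D\<^sub>1 + \<dots> + D\<^sub>m = 1/2 - (N\<^sub>m - N\<^sub>m\<^sub>+\<^sub>1)\<close>, i.e. \<open>N\<^sub>m - N\<^sub>m\<^sub>+\<^sub>1 \<equiv> 1/2\<close>, and
summing these over \<open>m = k, \<dots>, n - 1\<close> gives \<open>N\<^sub>k \<equiv> (n - k)/2\<close>.\<close>

lemma toggle_equiv_cong:
  assumes "toggle_equiv Q f' g'"
    and "\<And>I. I \<in> order_ideals Q \<Longrightarrow> f I = f' I"
    and "\<And>I. I \<in> order_ideals Q \<Longrightarrow> g I = g' I"
  shows "toggle_equiv Q f g"
  using assms unfolding toggle_equiv_def by auto

lemma toggle_equiv_sum:
  assumes "\<And>m. m \<in> M \<Longrightarrow> toggle_equiv Q (f m) (g m)"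
  shows "toggle_equiv Q (\<lambda>I. \<Sum>m\<in>M. f m I) (\<lambda>I. \<Sum>m\<in>M. g m I)"
proof -
  have "\<forall>m\<in>M. \<exists>c. \<forall>I\<in>order_ideals Q. f m I - g m I = (\<Sum>x\<in>Q. c x * toggle Q x I)"
    using assms unfolding toggle_equiv_def by blast
  then obtain c where c: "\<forall>m\<in>M. \<forall>I\<in>order_ideals Q. f m I - g m I = (\<Sum>x\<in>Q. c m x * toggle Q x I)"
    by (rule bchoice[THEN exE])
  have "(\<Sum>m\<in>M. f m I) - (\<Sum>m\<in>M. g m I) = (\<Sum>x\<in>Q. (\<Sum>m\<in>M. c m x) * toggle Q x I)"
    if "I \<in> order_ideals Q" for I
  proof -
    have "(\<Sum>m\<in>M. f m I) - (\<Sum>m\<in>M. g m I) = (\<Sum>m\<in>M. f m I - g m I)"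
      by (rule sum_subtractf[symmetric])
    also have "\<dots> = (\<Sum>m\<in>M. \<Sum>x\<in>Q. c m x * toggle Q x I)"
      using c that by (intro sum.cong refl) blast
    also have "\<dots> = (\<Sum>x\<in>Q. (\<Sum>m\<in>M. c m x) * toggle Q x I)"
      by (subst sum.swap) (simp add: sum_distrib_right)
    finally show ?thesis .
  qed
  then show ?thesis
    unfolding toggle_equiv_def by (intro exI[of _ "\<lambda>x. \<Sum>m\<in>M. c m x"]) blast
qed

lemma down_closed_eq_atLeastAtMost_card:
  fixes A :: "nat set"
  assumes "finite A" and "0 \<notin> A"
    and "\<And>i i'. i \<in> A \<Longrightarrow> 1 \<le> i' \<Longrightarrow> i' \<le> i \<Longrightarrow> i' \<in> A"
  shows "A = {1..card A}"
proof (cases "A = {}")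
  case False
  have "A \<subseteq> {1..Max A}"
    using assms(1,2) by (fastforce simp: Suc_le_eq intro: gr0I)
  moreover have "{1..Max A} \<subseteq> A"
    using assms(3) Max_in[OF assms(1) False] by auto
  ultimately have "A = {1..Max A}" by blast
  moreover have "card {1..Max A} = Max A" by simp
  ultimately show ?thesis by metis
qed simp

lemma mem_staircase [simp]: "(i, j) \<in> staircase n \<longleftrightarrow> 1 \<le> i \<and> i \<le> j \<and> j \<le> n"
  by (simp add: staircase_def)

lemma finite_staircase: "finite (staircase n)"
  by (rule finite_subset[of _ "{1..n} \<times> {1..n}"]) (auto simp: staircase_def)

lemma staircase_diagonal_eq: "{(i, j) \<in> staircase n. j - i = e} = (\<lambda>i. (i, i + e)) ` {1..n - e}"
proof
  show "{(i, j) \<in> staircase n. j - i = e} \<subseteq> (\<lambda>i. (i, i + e)) ` {1..n - e}"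
  proof
    fix x assume "x \<in> {(i, j) \<in> staircase n. j - i = e}"
    then obtain i where "x = (i, i + e)" and "i \<in> {1..n - e}" by auto
    then show "x \<in> (\<lambda>i. (i, i + e)) ` {1..n - e}" by blast
  qed
qed auto

lemma sum_staircase_diagonal:
  "(\<Sum>x\<in>{(i, j) \<in> staircase n. j - i = e}. f x) = (\<Sum>i\<in>{1..n - e}. f (i, i + e))"
  unfolding staircase_diagonal_eq by (simp add: sum.reindex inj_on_def)

lemma sum_staircase_by_diagonals:
  "(\<Sum>x\<in>staircase n. f x) = (\<Sum>e<n. \<Sum>i\<in>{1..n - e}. f (i, i + e))"
proof -
  have "(\<Sum>x\<in>staircase n. f x) = (\<Sum>e<n. \<Sum>x\<in>{x \<in> staircase n. snd x - fst x = e}. f x)"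
    by (rule sum.group[OF finite_staircase, symmetric]) (auto simp: staircase_def)
  also have "\<dots> = (\<Sum>e<n. \<Sum>x\<in>{(i, j) \<in> staircase n. j - i = e}. f x)"
    by (intro sum.cong refl) auto
  also have "\<dots> = (\<Sum>e<n. \<Sum>i\<in>{1..n - e}. f (i, i + e))"
    by (simp only: sum_staircase_diagonal)
  finally show ?thesis .
qed

definition diag_count :: "nat \<Rightarrow> (nat \<times> nat) set \<Rightarrow> nat \<Rightarrow> nat" where
  "diag_count n I e = card {i \<in> {1..n - e}. (i, i + e) \<in> I}"

definition diag_toggle_sum :: "nat \<Rightarrow> (nat \<times> nat) set \<Rightarrow> nat \<Rightarrow> real" where
  "diag_toggle_sum n I e = (\<Sum>i\<in>{1..n - e}. toggle (staircase n) (i, i + e) I)"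

definition diag_weight :: "nat \<Rightarrow> real" where
  "diag_weight e = (if e = 0 then 1/2 else 1)"

locale staircase_ideal =
  fixes n :: nat and I :: "(nat \<times> nat) set"
  assumes ideal: "I \<in> order_ideals (staircase n)"
begin

abbreviation N :: "nat \<Rightarrow> nat" where
  "N \<equiv> diag_count n I"

lemma ideal_subset_staircase: "x \<in> I \<Longrightarrow> x \<in> staircase n"
  using ideal by (auto simp: order_ideals_def)

lemma ideal_down_closed:
  assumes "(a, b) \<in> I" and "1 \<le> a'" and "a' \<le> b'" and "a' \<le> a" and "b' \<le> b"
  shows "(a', b') \<in> I"
proof -
  have "(a', b') \<in> staircase n"
    using assms ideal_subset_staircase[OF assms(1)] by simp
  then show ?thesis
    using ideal assms unfolding order_ideals_def pleq_def by force
qed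

lemma ideal_diagonal_eq: "{i \<in> {1..n - e}. (i, i + e) \<in> I} = {1..N e}"
  unfolding diag_count_def
  by (rule down_closed_eq_atLeastAtMost_card) (auto intro: ideal_down_closed)

lemma mem_ideal_diagonal_iff:
  assumes "1 \<le> i" and "i + e \<le> n"
  shows "(i, i + e) \<in> I \<longleftrightarrow> i \<le> N e"
proof -
  have "(i, i + e) \<in> I \<longleftrightarrow> i \<in> {i \<in> {1..n - e}. (i, i + e) \<in> I}"
    using assms by auto
  also have "\<dots> \<longleftrightarrow> i \<le> N e"
    unfolding ideal_diagonal_eq using assms(1) by simp
  finally show ?thesis .
qed

lemma diag_count_le: "N e \<le> n - e"
proof -
  have "N e \<le> card {1..n - e}"
    unfolding diag_count_def by (rule card_mono) auto
  then show ?thesis by simp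
qed

lemma diag_count_Suc_le: "N (Suc e) \<le> N e"
proof (cases "N (Suc e) = 0")
  case False
  then have "1 \<le> N (Suc e)" and "N (Suc e) + Suc e \<le> n"
    using diag_count_le[of "Suc e"] by auto
  then have "(N (Suc e), N (Suc e) + Suc e) \<in> I"
    using mem_ideal_diagonal_iff by blast
  then have "(N (Suc e), N (Suc e) + e) \<in> I"
    using \<open>1 \<le> N (Suc e)\<close> by (rule ideal_down_closed) auto
  then show ?thesis
    using mem_ideal_diagonal_iff \<open>1 \<le> N (Suc e)\<close> \<open>N (Suc e) + Suc e \<le> n\<close> by simp
qed simp

lemma diag_count_le_Suc: "N e \<le> N (Suc e) + 1"
proof (cases "N e \<le> 1")
  case False
  then have "2 \<le> N e" and "N e + e \<le> n"
    using diag_count_le[of e] by auto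
  then have "(N e, N e + e) \<in> I"
    using mem_ideal_diagonal_iff by simp
  then have "(N e - 1, (N e - 1) + Suc e) \<in> I"
    using \<open>2 \<le> N e\<close> by (auto elim: ideal_down_closed)
  then have "N e - 1 \<le> N (Suc e)"
    using \<open>2 \<le> N e\<close> \<open>N e + e \<le> n\<close> by (subst (asm) mem_ideal_diagonal_iff) auto
  then show ?thesis by simp
qed simp

lemma minimal_outside_ideal_iff:
  assumes "(i, j) \<in> staircase n"
  shows "(\<forall>y\<in>staircase n - I. pleq y (i, j) \<longrightarrow> y = (i, j)) \<longleftrightarrow>
    (1 < i \<longrightarrow> (i - 1, j) \<in> I) \<and> (i < j \<longrightarrow> (i, j - 1) \<in> I)"
proof
  assume min: "\<forall>y\<in>staircase n - I. pleq y (i, j) \<longrightarrow> y = (i, j)"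
  show "(1 < i \<longrightarrow> (i - 1, j) \<in> I) \<and> (i < j \<longrightarrow> (i, j - 1) \<in> I)"
  proof (intro conjI impI)
    assume "1 < i"
    then have "(i - 1, j) \<in> staircase n" and "pleq (i - 1, j) (i, j)"
      using assms by (auto simp: pleq_def)
    then show "(i - 1, j) \<in> I" using min \<open>1 < i\<close> by fastforce
  next
    assume "i < j"
    then have "(i, j - 1) \<in> staircase n" and "pleq (i, j - 1) (i, j)"
      using assms by (auto simp: pleq_def)
    then show "(i, j - 1) \<in> I" using min \<open>i < j\<close> by fastforce
  qed
next
  assume covers: "(1 < i \<longrightarrow> (i - 1, j) \<in> I) \<and> (i < j \<longrightarrow> (i, j - 1) \<in> I)"
  show "\<forall>y\<in>staircase n - I. pleq y (i, j) \<longrightarrow> y = (i, j)"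
  proof (intro ballI impI)
    fix y assume "y \<in> staircase n - I" "pleq y (i, j)"
    then obtain a b where y: "y = (a, b)" and "1 \<le> a" "a \<le> b" "(a, b) \<notin> I" "a \<le> i" "b \<le> j"
      by (cases y) (auto simp: pleq_def)
    moreover have "(a, b) \<in> I" if "a < i"
      using covers that \<open>1 \<le> a\<close> \<open>a \<le> b\<close> \<open>b \<le> j\<close> by (auto elim: ideal_down_closed)
    moreover have "(a, b) \<in> I" if "b < j"
      using covers that \<open>1 \<le> a\<close> \<open>a \<le> b\<close> \<open>a \<le> i\<close> by (auto elim: ideal_down_closed)
    ultimately show "y = (i, j)" by fastforce
  qed
qed

lemma maximal_in_ideal_iff:
  assumes "(i, j) \<in> I"
  shows "(\<forall>y\<in>I. pleq (i, j) y \<longrightarrow> y = (i, j)) \<longleftrightarrow>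
    (i < j \<longrightarrow> (i + 1, j) \<notin> I) \<and> (j < n \<longrightarrow> (i, j + 1) \<notin> I)"
proof
  assume "\<forall>y\<in>I. pleq (i, j) y \<longrightarrow> y = (i, j)"
  then show "(i < j \<longrightarrow> (i + 1, j) \<notin> I) \<and> (j < n \<longrightarrow> (i, j + 1) \<notin> I)"
    by (auto simp: pleq_def)
next
  assume covers: "(i < j \<longrightarrow> (i + 1, j) \<notin> I) \<and> (j < n \<longrightarrow> (i, j + 1) \<notin> I)"
  have ij: "1 \<le> i" "i \<le> j"
    using ideal_subset_staircase[OF assms] by auto
  show "\<forall>y\<in>I. pleq (i, j) y \<longrightarrow> y = (i, j)"
  proof (clarsimp simp: pleq_def)
    fix a b assume ab: "(a, b) \<in> I" "i \<le> a" "j \<le> b"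
    have "a \<le> b" "b \<le> n"
      using ideal_subset_staircase[OF ab(1)] by auto
    have "(i + 1, j) \<in> I" if "i < a" "b = j"
      using ab that ij \<open>a \<le> b\<close> by (auto elim: ideal_down_closed)
    moreover have "(i, j + 1) \<in> I" if "j < b"
      using ab that ij by (auto elim: ideal_down_closed)
    ultimately show "a = i \<and> b = j"
      using covers ab \<open>a \<le> b\<close> \<open>b \<le> n\<close> by fastforce
  qed
qed

lemma Tplus_diagonal:
  assumes "1 \<le> i" and "i + e \<le> n"
  shows "Tplus (staircase n) (i, i + e) I =
    (if i = N e + 1 \<and> N (Suc e) = N e \<and> (0 < e \<longrightarrow> N (e - 1) = N e + 1) then 1 else 0)"
proof -
  have in_I: "(i, i + e) \<in> I \<longleftrightarrow> i \<le> N e"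
    using assms by (rule mem_ideal_diagonal_iff)
  have left: "(i - 1, i + e) \<in> I \<longleftrightarrow> i - 1 \<le> N (Suc e)" if "1 < i"
    using mem_ideal_diagonal_iff[of "i - 1" "Suc e"] assms that by simp
  have below: "(i, i + e - 1) \<in> I \<longleftrightarrow> i \<le> N (e - 1)" if "0 < e"
    using mem_ideal_diagonal_iff[of i "e - 1"] assms that by simp
  have "N (Suc e) \<le> N e" "N e \<le> N (Suc e) + 1" "N (Suc e) \<le> n - Suc e"
    using diag_count_Suc_le diag_count_le_Suc diag_count_le by blast+
  moreover have "N e \<le> N (e - 1)" "N (e - 1) \<le> N e + 1" if "0 < e"
    using diag_count_Suc_le[of "e - 1"] diag_count_le_Suc[of "e - 1"] that by simp_all
  ultimately show ?thesis
    unfolding Tplus_def using minimal_outside_ideal_iff[of i "i + e"] assms in_I left below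
    by (cases "1 < i"; cases "0 < e") auto
qed

lemma Tminus_diagonal:
  assumes "1 \<le> i" and "i + e \<le> n"
  shows "Tminus (staircase n) (i, i + e) I =
    (if i = N e \<and> N (Suc e) + 1 = N e \<and> (0 < e \<longrightarrow> N (e - 1) = N e) then 1 else 0)"
proof -
  have in_I: "(i, i + e) \<in> I \<longleftrightarrow> i \<le> N e"
    using assms by (rule mem_ideal_diagonal_iff)
  have right: "(i + 1, i + e) \<in> I \<longleftrightarrow> i + 1 \<le> N (e - 1)" if "0 < e"
    using mem_ideal_diagonal_iff[of "i + 1" "e - 1"] assms that by simp
  have above: "(i, i + e + 1) \<in> I \<longleftrightarrow> i \<le> N (Suc e)" if "i + e < n"
    using mem_ideal_diagonal_iff[of i "Suc e"] assms that by simp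
  have "N (Suc e) \<le> N e" "N e \<le> N (Suc e) + 1" "N e \<le> n - e" "N (Suc e) \<le> n - Suc e"
    using diag_count_Suc_le diag_count_le_Suc diag_count_le by blast+
  moreover have "N e \<le> N (e - 1)" "N (e - 1) \<le> N e + 1" if "0 < e"
    using diag_count_Suc_le[of "e - 1"] diag_count_le_Suc[of "e - 1"] that by simp_all
  ultimately show ?thesis
    unfolding Tminus_def using maximal_in_ideal_iff[of i "i + e"] assms in_I right above
    by (cases "i + e < n"; cases "0 < e") auto
qed

lemma sum_Tplus_diagonal:
  assumes "e < n"
  shows "(\<Sum>i\<in>{1..n - e}. Tplus (staircase n) (i, i + e) I) =
    (if N (Suc e) = N e \<and> (0 < e \<longrightarrow> N (e - 1) = N e + 1) then 1 else 0)"
proof -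
  have "(\<Sum>i\<in>{1..n - e}. Tplus (staircase n) (i, i + e) I) =
    (\<Sum>i\<in>{1..n - e}. if i = N e + 1 then
      (if N (Suc e) = N e \<and> (0 < e \<longrightarrow> N (e - 1) = N e + 1) then 1 else 0) else 0)"
    (is "_ = (\<Sum>i\<in>_. if i = ?i then ?v else 0)")
  proof (rule sum.cong[OF refl])
    fix i assume "i \<in> {1..n - e}"
    then have "1 \<le> i" and "i + e \<le> n" by auto
    then show "Tplus (staircase n) (i, i + e) I = (if i = ?i then ?v else 0)"
      by (simp add: Tplus_diagonal)
  qed
  moreover have "N e + 1 \<le> n - e" if "N (Suc e) = N e"
    using diag_count_le[of "Suc e"] that assms by simp
  ultimately show ?thesis by auto
qed

lemma sum_Tminus_diagonal:
  "(\<Sum>i\<in>{1..n - e}. Tminus (staircase n) (i, i + e) I) =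
    (if N (Suc e) + 1 = N e \<and> (0 < e \<longrightarrow> N (e - 1) = N e) then 1 else 0)"
proof -
  have "(\<Sum>i\<in>{1..n - e}. Tminus (staircase n) (i, i + e) I) =
    (\<Sum>i\<in>{1..n - e}. if i = N e then
      (if N (Suc e) + 1 = N e \<and> (0 < e \<longrightarrow> N (e - 1) = N e) then 1 else 0) else 0)"
    (is "_ = (\<Sum>i\<in>_. if i = ?i then ?v else 0)")
  proof (rule sum.cong[OF refl])
    fix i assume "i \<in> {1..n - e}"
    then have "1 \<le> i" and "i + e \<le> n" by auto
    then show "Tminus (staircase n) (i, i + e) I = (if i = ?i then ?v else 0)"
      by (simp add: Tminus_diagonal)
  qed
  then show ?thesis using diag_count_le[of e] by auto
qed

lemma diag_toggle_sum_eq: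
  assumes "e < n"
  shows "diag_toggle_sum n I e =
    (if N (Suc e) = N e \<and> (0 < e \<longrightarrow> N (e - 1) = N e + 1) then 1 else 0) -
    (if N (Suc e) + 1 = N e \<and> (0 < e \<longrightarrow> N (e - 1) = N e) then 1 else 0)"
  unfolding diag_toggle_sum_def toggle_def sum_subtractf
  using sum_Tplus_diagonal[OF assms] sum_Tminus_diagonal by simp

lemma diag_toggle_sum_0:
  assumes "0 < n"
  shows "diag_toggle_sum n I 0 = 1 - 2 * (real (N 0) - real (N 1))"
  using diag_toggle_sum_eq[OF assms] diag_count_Suc_le[of 0] diag_count_le_Suc[of 0] by auto

lemma diag_toggle_sum_Suc:
  assumes "Suc e < n"
  shows "diag_toggle_sum n I (Suc e) =
    (real (N e) - real (N (Suc e))) - (real (N (Suc e)) - real (N (Suc (Suc e))))"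
  using diag_toggle_sum_eq[OF assms] diag_count_Suc_le[of e] diag_count_le_Suc[of e]
    diag_count_Suc_le[of "Suc e"] diag_count_le_Suc[of "Suc e"] by auto

lemma weighted_sum_diag_toggle_sum:
  assumes "m < n"
  shows "(\<Sum>e\<le>m. diag_weight e * diag_toggle_sum n I e) = 1/2 - (real (N m) - real (N (Suc m)))"
  using assms
proof (induction m)
  case 0
  then show ?case by (simp add: diag_weight_def diag_toggle_sum_0)
next
  case (Suc m)
  then show ?case by (simp add: diag_weight_def diag_toggle_sum_Suc)
qed

lemma sum_indic_diagonal: "(\<Sum>p\<in>{(i, j) \<in> staircase n. j - i = e}. indic p I) = real (N e)"
proof -
  have "(\<Sum>p\<in>{(i, j) \<in> staircase n. j - i = e}. indic p I) = (\<Sum>i\<in>{1..n - e}. indic (i, i + e) I)"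
    by (rule sum_staircase_diagonal)
  also have "\<dots> = real (card {i \<in> {1..n - e}. (i, i + e) \<in> I})"
    by (simp add: indic_def flip: sum.inter_filter)
  finally show ?thesis by (simp add: diag_count_def)
qed

lemma diag_count_telescope:
  assumes "k \<le> n"
  shows "real (N k) = (\<Sum>m\<in>{k..<n}. real (N m) - real (N (Suc m)))"
  using sum_Suc_diff'[OF assms, of "\<lambda>m. - real (N m)"] diag_count_le[of n]
  by (simp add: sum_negf[symmetric])

end

lemma diag_gap_toggle_equiv_half:
  assumes "m < n"
  shows "toggle_equiv (staircase n)
    (\<lambda>I. real (diag_count n I m) - real (diag_count n I (Suc m))) (\<lambda>I. 1/2)"
proof -
  define c :: "nat \<times> nat \<Rightarrow> real"
    where "c = (\<lambda>(i, j). if j - i \<le> m then - diag_weight (j - i) else 0)"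
  have "real (diag_count n I m) - real (diag_count n I (Suc m)) - 1/2 =
      (\<Sum>x\<in>staircase n. c x * toggle (staircase n) x I)"
    if "I \<in> order_ideals (staircase n)" for I
  proof -
    interpret staircase_ideal n I by (rule staircase_ideal.intro) fact
    have "(\<Sum>x\<in>staircase n. c x * toggle (staircase n) x I) =
        (\<Sum>e<n. (if e \<le> m then - diag_weight e else 0) * diag_toggle_sum n I e)"
      unfolding sum_staircase_by_diagonals diag_toggle_sum_def sum_distrib_left
      by (simp add: c_def cong: if_cong)
    also have "\<dots> = (\<Sum>e<n. if e \<le> m then - diag_weight e * diag_toggle_sum n I e else 0)"
      by (intro sum.cong refl) simp
    also have "\<dots> = - (\<Sum>e\<le>m. diag_weight e * diag_toggle_sum n I e)"
    proof -
      have "{e \<in> {..<n}. e \<le> m} = {..m}" using assms by auto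
      then show ?thesis by (simp add: sum.inter_filter[symmetric] sum_negf)
    qed
    also have "\<dots> = real (diag_count n I m) - real (diag_count n I (Suc m)) - 1/2"
      using weighted_sum_diag_toggle_sum[OF assms] by simp
    finally show ?thesis by simp
  qed
  then show ?thesis unfolding toggle_equiv_def by blast
qed

theorem theorem3p17:
  fixes n k :: nat
  assumes "n \<ge> 1" and "k \<le> n - 1"
  shows "toggle_equiv (staircase n)
           (\<lambda>I. \<Sum>p\<in>{(i, j) \<in> staircase n. j - i = k}. indic p I)
           (\<lambda>I. (real n - real k) / 2)"
proof -
  have "k < n" using assms by simp
  have "toggle_equiv (staircase n)
      (\<lambda>I. \<Sum>m\<in>{k..<n}. real (diag_count n I m) - real (diag_count n I (Suc m)))
      (\<lambda>I. \<Sum>m\<in>{k..<n}. 1/2)"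
  proof (rule toggle_equiv_sum)
    fix m assume "m \<in> {k..<n}"
    then show "toggle_equiv (staircase n)
        (\<lambda>I. real (diag_count n I m) - real (diag_count n I (Suc m))) (\<lambda>I. 1/2)"
      by (intro diag_gap_toggle_equiv_half) simp
  qed
  then show ?thesis
  proof (rule toggle_equiv_cong)
    fix I assume "I \<in> order_ideals (staircase n)"
    then interpret staircase_ideal n I by (rule staircase_ideal.intro)
    show "(\<Sum>p\<in>{(i, j) \<in> staircase n. j - i = k}. indic p I) =
        (\<Sum>m\<in>{k..<n}. real (diag_count n I m) - real (diag_count n I (Suc m)))"
      unfolding sum_indic_diagonal by (rule diag_count_telescope) (use \<open>k < n\<close> in simp)
  next
    show "(real n - real k) / 2 = (\<Sum>m\<in>{k..<n}. 1/2 :: real)"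
      using \<open>k < n\<close> by (simp add: of_nat_diff)
  qed
qed

end
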